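(* Let $f$ be a tolerance function with $0<f(K)<K$. For given $\mathbf x,\mathbf y$, let $p=\lim_{n\to\infty}P(\mathbf y\in L(\mathbf x))<1$. Then $P(\mathbf y\in I(\mathbf x,f))=0$ holds if $$\lim_{K\to\infty}\frac{f(K)\ln K}{K}<-\ln p.$$ Furthermore, if $p<0.5$, then $P(\mathbf y\in I(\mathbf x,f))=0$ holds as soon as $\lim_{K\to\infty}f(K)/K=0$. Finally, for any such $f$, $\lim_{n\to\infty}P(\mathbf y\in L(\mathbf x))=1$ implies $P(\mathbf y\in I(\mathbf x,f))=1$.
   Context: Setting: $n$ instances form the dataset $\mathcal D=\mathcal D_n$; a forest $\Theta_K$ of $K$ axis-aligned causal trees is built on $\mathcal D$, the trees independent given $\mathcal D$. $L_k(\mathbf x)$ is the leaf of tree $k$ containing $\mathbf x$, $I(\mathbf x,\theta_k)$ its box; $P(\mathbf y\in L(\mathbf x))=P(\mathbf y\in L_k(\mathbf x)\mid\mathcal D)$, same for every $k$, with the events independent across $k$. LILI with $K$ trees under tolerance function $f$: $I(\mathbf x,\Theta_K,f)=\bigcup_{s>K-f(K)}\bigcup_{1\le i_1<\cdots<i_s\le K}\bigcap_{k=1}^sI(\mathbf x,\theta_{i_k})$, i.e. $\mathbf y\in I(\mathbf x,\Theta_K,f)$ iff the number of $k$ with $\mathbf y\in L_k(\mathbf x)$ exceeds $K-f(K)$; $P(\mathbf y\in I(\mathbf x,f)):=\lim_{K\to\infty}\lim_{n\to\infty}P(\mathbf y\in I(\mathbf x,\Theta_K,f)\mid\mathcal D_n)$.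 *)

theory Defs
  imports "HOL-Probability.Probability"
begin

text \<open>Probability, given the data set, that y lies in the LILI interval of x built from K
  trees when each tree independently puts y into the leaf of x with probability q:
  the number of trees k < K with y in L_k(x) must exceed K - f K.\<close>
definition lili_prob :: "(nat \<Rightarrow> real) \<Rightarrow> nat \<Rightarrow> real \<Rightarrow> real" where
  "lili_prob f K q =
     measure_pmf.prob (Pi_pmf {..<K} False (\<lambda>_. bernoulli_pmf q))
       {\<omega>. real (card {k\<in>{..<K}. \<omega> k}) > real K - f K}"

text \<open>P(y in I(x,f)) = lim_K lim_n P(y in I(x,Theta_K,f) | D_n), where pn n is
  P(y in L(x) | D_n). We say this iterated limit equals c if all inner limits exist and
  the outer limit is c.\<close>
definition lili_limit_is :: "(nat \<Rightarrow> real) \<Rightarrow> (nat \<Rightarrow> real) \<Rightarrow> real \<Rightarrow> bool" where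
  "lili_limit_is f pn c \<longleftrightarrow>
     (\<forall>K. convergent (\<lambda>n. lili_prob f K (pn n))) \<and>
     ((\<lambda>K. lim (\<lambda>n. lili_prob f K (pn n))) \<longlonglongrightarrow> c)"

end

theory Submission
  imports Defs "HOL-Real_Asymp.Real_Asymp"
begin

text \<open>The number of trees putting y into the leaf of x is binomially distributed, so
  P(y \<in> I(x,\<Theta>_K,f)) is a binomial upper tail. Every accepted count j exceeds K - f K,
  hence each term is at most \<open>K choose j\<close> times q powr (K - f K); bounding the number of
  binomial coefficients by K powr f K (at most K+1 of them, each at most K powr f K)
  or by 2^K gives a bound whose logarithm per tree tends to c + ln q, resp. ln (2q).
  A negative rate forces the probability to 0. For q = 0 and q = 1 the tail is exactly
  0 and 1, and the limit in n is harmless since the tail is a polynomial in q.\<close>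

definition lili_counts :: "(nat \<Rightarrow> real) \<Rightarrow> nat \<Rightarrow> nat set" where
  "lili_counts f K = {j. j \<le> K \<and> real K - f K < real j}"

lemma finite_lili_counts [simp]: "finite (lili_counts f K)"
  by (simp add: lili_counts_def)

lemma lili_prob_eq_binomial_tail:
  assumes "0 \<le> q" "q \<le> 1"
  shows "lili_prob f K q = (\<Sum>j\<in>lili_counts f K. real (K choose j) * q ^ j * (1 - q) ^ (K - j))"
proof -
  let ?B = "binomial_pmf K q" and ?A = "{j::nat. real K - f K < real j}"
  have "?B = map_pmf (\<lambda>\<omega>. card {k\<in>{..<K}. \<omega> k}) (Pi_pmf {..<K} False (\<lambda>_. bernoulli_pmf q))"
    using assms by (intro binomial_pmf_altdef') auto
  then have "lili_prob f K q = measure_pmf.prob ?B ?A"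
    by (simp add: lili_prob_def vimage_def)
  also have "\<dots> = measure_pmf.prob ?B (?A \<inter> set_pmf ?B)"
    by (rule measure_Int_set_pmf[symmetric])
  also have "?A \<inter> set_pmf ?B = lili_counts f K \<inter> set_pmf ?B"
    using assms by (auto simp: lili_counts_def set_pmf_binomial_eq)
  also have "measure_pmf.prob ?B \<dots> = measure_pmf.prob ?B (lili_counts f K)"
    by (rule measure_Int_set_pmf)
  also have "\<dots> = sum (pmf ?B) (lili_counts f K)"
    by (rule measure_measure_pmf_finite) simp
  finally show ?thesis
    using assms by simp
qed

lemma lili_prob_nonneg: "0 \<le> lili_prob f K q"
  by (simp add: lili_prob_def)

lemma lili_prob_at_zero:
  assumes "1 \<le> K" "f K < real K"
  shows "lili_prob f K 0 = 0"
  using assms by (auto simp: lili_prob_eq_binomial_tail lili_counts_def intro!: sum.neutral)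

lemma lili_prob_at_one:
  assumes "0 < f K"
  shows "lili_prob f K 1 = 1"
proof -
  have "lili_prob f K 1 = (\<Sum>j\<in>{K}. real (K choose j) * 1 ^ j * (1 - 1) ^ (K - j))"
    unfolding lili_prob_eq_binomial_tail[OF zero_le_one order_refl]
    by (rule sum.mono_neutral_right) (use assms in \<open>auto simp: lili_counts_def\<close>)
  then show ?thesis
    by simp
qed

lemma lili_prob_le_binomial_sum:
  assumes "0 < q" "q \<le> 1"
  shows "lili_prob f K q \<le> (\<Sum>j\<in>lili_counts f K. real (K choose j)) * q powr (real K - f K)"
proof -
  have "real (K choose j) * q ^ j * (1 - q) ^ (K - j) \<le> real (K choose j) * q powr (real K - f K)"
    if "j \<in> lili_counts f K" for j
  proof -
    have "q ^ j * (1 - q) ^ (K - j) \<le> q ^ j"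
      using assms by (intro mult_left_le power_le_one) auto
    also have "\<dots> = q powr real j"
      using assms by (simp add: powr_realpow)
    also have "\<dots> \<le> q powr (real K - f K)"
      using assms that by (intro powr_mono') (auto simp: lili_counts_def)
    finally show ?thesis
      by (simp add: mult.assoc mult_left_mono)
  qed
  then show ?thesis
    using assms by (simp add: lili_prob_eq_binomial_tail sum_distrib_right sum_mono)
qed

lemma binomial_sum_lili_counts_le_powr:
  assumes "1 \<le> K"
  shows "(\<Sum>j\<in>lili_counts f K. real (K choose j)) \<le> (real K + 1) * real K powr f K"
proof -
  have "real (K choose j) \<le> real K powr f K" if j: "j \<in> lili_counts f K" for j
  proof -
    have "real (K choose j) = real (K choose (K - j))"
      using j by (subst binomial_symmetric[of j K]) (auto simp: lili_counts_def)
    also have "\<dots> \<le> real (K ^ (K - j))"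
      by (simp only: of_nat_le_iff binomial_le_pow)
    also have "\<dots> = real K powr real (K - j)"
      using assms by (simp add: powr_realpow)
    also have "\<dots> \<le> real K powr f K"
      using assms j by (intro powr_mono) (auto simp: lili_counts_def)
    finally show ?thesis .
  qed
  then have "(\<Sum>j\<in>lili_counts f K. real (K choose j)) \<le> real (card (lili_counts f K)) * real K powr f K"
    by (rule sum_bounded_above)
  also have "\<dots> \<le> (real K + 1) * real K powr f K"
  proof (rule mult_right_mono)
    have "card (lili_counts f K) \<le> card {..K}"
      by (rule card_mono) (auto simp: lili_counts_def)
    then show "real (card (lili_counts f K)) \<le> real K + 1"
      by simp
  qed simp
  finally show ?thesis .
qed

lemma binomial_sum_lili_counts_le_two_pow:
  "(\<Sum>j\<in>lili_counts f K. real (K choose j)) \<le> 2 ^ K"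
proof -
  have "(\<Sum>j\<in>lili_counts f K. real (K choose j)) \<le> (\<Sum>j\<le>K. real (K choose j))"
    by (intro sum_mono2) (auto simp: lili_counts_def)
  also have "\<dots> = 2 ^ K"
    using choose_row_sum[of K] by (simp flip: of_nat_sum)
  finally show ?thesis .
qed

lemma tendsto_zero_if_log_rate_negative:
  fixes a b :: "nat \<Rightarrow> real"
  assumes bound: "\<forall>\<^sub>F K in sequentially. 0 \<le> a K \<and> a K \<le> b K"
    and pos: "\<forall>\<^sub>F K in sequentially. 0 < b K"
    and rate: "(\<lambda>K. ln (b K) / real K) \<longlonglongrightarrow> d" and "d < 0"
  shows "a \<longlonglongrightarrow> 0"
proof -
  have "filterlim (\<lambda>K. ln (b K) / real K * real K) at_bot sequentially"
    using rate \<open>d < 0\<close> filterlim_real_sequentially by (rule filterlim_tendsto_neg_mult_at_bot)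
  then have "(\<lambda>K. exp (ln (b K) / real K * real K)) \<longlonglongrightarrow> 0"
    by (rule filterlim_compose[OF exp_at_bot])
  moreover have "\<forall>\<^sub>F K in sequentially. exp (ln (b K) / real K * real K) = b K"
    using pos eventually_gt_at_top[of 0] by eventually_elim simp
  ultimately have b: "b \<longlonglongrightarrow> 0"
    by (rule Lim_transform_eventually)
  have lower: "\<forall>\<^sub>F K in sequentially. 0 \<le> a K" and upper: "\<forall>\<^sub>F K in sequentially. a K \<le> b K"
    using bound by (simp_all add: eventually_conj_iff)
  show ?thesis
    using lower upper tendsto_const b by (rule tendsto_sandwich)
qed

lemma tendsto_zero_if_times_ln_convergent:
  fixes g :: "nat \<Rightarrow> real"
  assumes "(\<lambda>K. g K * ln (real K) / real K) \<longlonglongrightarrow> c"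
  shows "(\<lambda>K. g K / real K) \<longlonglongrightarrow> 0"
proof -
  have "(\<lambda>K::nat. 1 / ln (real K)) \<longlonglongrightarrow> 0"
    by real_asymp
  then have "(\<lambda>K. g K * ln (real K) / real K * (1 / ln (real K))) \<longlonglongrightarrow> c * 0"
    using assms by (intro tendsto_mult)
  moreover have "\<forall>\<^sub>F K in sequentially. g K * ln (real K) / real K * (1 / ln (real K)) = g K / real K"
    using eventually_ge_at_top[of "2::nat"] by eventually_elim simp
  ultimately show ?thesis
    by (simp add: tendsto_cong)
qed

lemma lili_prob_tendsto_zero_if_log_tolerance:
  assumes q: "0 < q" "q < 1"
    and c: "(\<lambda>K. f K * ln (real K) / real K) \<longlonglongrightarrow> c" "c < - ln q"
  shows "(\<lambda>K. lili_prob f K q) \<longlonglongrightarrow> 0"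
proof (rule tendsto_zero_if_log_rate_negative)
  let ?b = "\<lambda>K. (real K + 1) * real K powr f K * q powr (real K - f K)"
  show "\<forall>\<^sub>F K in sequentially. 0 \<le> lili_prob f K q \<and> lili_prob f K q \<le> ?b K"
    using eventually_ge_at_top[of "1::nat"]
  proof eventually_elim
    case (elim K)
    have "lili_prob f K q \<le> (\<Sum>j\<in>lili_counts f K. real (K choose j)) * q powr (real K - f K)"
      using q by (intro lili_prob_le_binomial_sum) auto
    also have "\<dots> \<le> ?b K"
      using elim by (intro mult_right_mono binomial_sum_lili_counts_le_powr) auto
    finally show ?case
      by (simp add: lili_prob_nonneg)
  qed
  show "\<forall>\<^sub>F K in sequentially. 0 < ?b K"
    using eventually_ge_at_top[of "1::nat"] by eventually_elim (use q in simp)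
  have "\<forall>\<^sub>F K in sequentially. ln (?b K) / real K
          = ln (real K + 1) / real K + f K * ln (real K) / real K + (1 - f K / real K) * ln q"
    using eventually_ge_at_top[of "1::nat"]
  proof eventually_elim
    case (elim K)
    then have "ln (?b K) = ln (real K + 1) + f K * ln (real K) + (real K - f K) * ln q"
      using q by (simp add: ln_mult ln_powr)
    then show ?case
      using elim by (simp add: add_divide_distrib diff_divide_distrib left_diff_distrib)
  qed
  moreover have "(\<lambda>K. ln (real K + 1) / real K + f K * ln (real K) / real K + (1 - f K / real K) * ln q)
      \<longlonglongrightarrow> 0 + c + (1 - 0) * ln q"
    by (intro tendsto_intros c tendsto_zero_if_times_ln_convergent[OF c(1)]) real_asymp
  ultimately show "(\<lambda>K. ln (?b K) / real K) \<longlonglongrightarrow> c + ln q"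
    by (simp add: tendsto_cong)
  show "c + ln q < 0"
    using c by simp
qed

lemma lili_prob_tendsto_zero_if_sublinear_tolerance:
  assumes q: "0 < q" "q < 1/2"
    and f: "(\<lambda>K. f K / real K) \<longlonglongrightarrow> 0"
  shows "(\<lambda>K. lili_prob f K q) \<longlonglongrightarrow> 0"
proof (rule tendsto_zero_if_log_rate_negative)
  let ?b = "\<lambda>K. 2 ^ K * q powr (real K - f K)"
  show "\<forall>\<^sub>F K in sequentially. 0 \<le> lili_prob f K q \<and> lili_prob f K q \<le> ?b K"
  proof (rule always_eventually, intro allI conjI)
    fix K
    have "lili_prob f K q \<le> (\<Sum>j\<in>lili_counts f K. real (K choose j)) * q powr (real K - f K)"
      using q by (intro lili_prob_le_binomial_sum) auto
    also have "\<dots> \<le> ?b K"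
      by (intro mult_right_mono binomial_sum_lili_counts_le_two_pow) auto
    finally show "lili_prob f K q \<le> ?b K" .
  qed (rule lili_prob_nonneg)
  show "\<forall>\<^sub>F K in sequentially. 0 < ?b K"
    using q by simp
  have "\<forall>\<^sub>F K in sequentially. ln (?b K) / real K = ln 2 + (1 - f K / real K) * ln q"
    using eventually_ge_at_top[of "1::nat"]
  proof eventually_elim
    case (elim K)
    then have "ln (?b K) = real K * ln 2 + (real K - f K) * ln q"
      using q by (simp add: ln_mult ln_powr ln_realpow)
    then show ?case
      using elim by (simp add: add_divide_distrib diff_divide_distrib left_diff_distrib)
  qed
  moreover have "(\<lambda>K. ln 2 + (1 - f K / real K) * ln q) \<longlonglongrightarrow> ln 2 + (1 - 0) * ln q"
    by (intro tendsto_intros f)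
  ultimately show "(\<lambda>K. ln (?b K) / real K) \<longlonglongrightarrow> ln 2 + ln q"
    by (simp add: tendsto_cong)
  have "ln (2 * q) < 0"
    using q by simp
  then show "ln 2 + ln q < 0"
    using q by (simp add: ln_mult)
qed

lemma lili_prob_tendsto_in_q:
  assumes "\<And>n. 0 \<le> pn n \<and> pn n \<le> 1" "pn \<longlonglongrightarrow> p"
  shows "(\<lambda>n. lili_prob f K (pn n)) \<longlonglongrightarrow> lili_prob f K p"
proof -
  have "0 \<le> p" "p \<le> 1"
    using assms by (auto intro: LIMSEQ_le_const LIMSEQ_le_const2)
  moreover have "(\<lambda>n. \<Sum>j\<in>lili_counts f K. real (K choose j) * pn n ^ j * (1 - pn n) ^ (K - j))
     \<longlonglongrightarrow> (\<Sum>j\<in>lili_counts f K. real (K choose j) * p ^ j * (1 - p) ^ (K - j))"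
    by (intro tendsto_intros assms)
  ultimately show ?thesis
    using assms by (simp add: lili_prob_eq_binomial_tail)
qed

lemma lili_limit_isI:
  assumes "\<And>n. 0 \<le> pn n \<and> pn n \<le> 1" "pn \<longlonglongrightarrow> p"
    and "(\<lambda>K. lili_prob f K p) \<longlonglongrightarrow> c"
  shows "lili_limit_is f pn c"
proof -
  have inner: "\<And>K. (\<lambda>n. lili_prob f K (pn n)) \<longlonglongrightarrow> lili_prob f K p"
    using assms(1,2) by (rule lili_prob_tendsto_in_q)
  then have "(\<lambda>K. lim (\<lambda>n. lili_prob f K (pn n))) = (\<lambda>K. lili_prob f K p)"
    by (intro ext limI)
  then show ?thesis
    unfolding lili_limit_is_def convergent_def using inner assms(3) by auto
qed

theorem mainTheorem13:
  fixes f :: "nat \<Rightarrow> real" and pn :: "nat \<Rightarrow> real" and p :: real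
  assumes tol: "\<And>K. K \<ge> 1 \<Longrightarrow> 0 < f K \<and> f K < real K"
    and pn_prob: "\<And>n. 0 \<le> pn n \<and> pn n \<le> 1"
    and pn_lim: "pn \<longlonglongrightarrow> p"
  shows "(p < 1 \<longrightarrow> (\<forall>c. ((\<lambda>K. f K * ln (real K) / real K) \<longlonglongrightarrow> c)
                       \<longrightarrow> (p = 0 \<or> c < - ln p) \<longrightarrow> lili_limit_is f pn 0))
    \<and> (p < 1/2 \<longrightarrow> ((\<lambda>K. f K / real K) \<longlonglongrightarrow> 0) \<longrightarrow> lili_limit_is f pn 0)
    \<and> (p = 1 \<longrightarrow> lili_limit_is f pn 1)"
proof -
  have p: "0 \<le> p" "p \<le> 1"
    using pn_prob pn_lim by (auto intro: LIMSEQ_le_const LIMSEQ_le_const2)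
  have "\<forall>\<^sub>F K in sequentially. lili_prob f K 0 = 0 \<and> lili_prob f K 1 = 1"
    using eventually_ge_at_top[of "1::nat"]
    by eventually_elim (simp add: tol lili_prob_at_zero lili_prob_at_one)
  then have at_zero: "(\<lambda>K. lili_prob f K 0) \<longlonglongrightarrow> 0" and at_one: "(\<lambda>K. lili_prob f K 1) \<longlonglongrightarrow> 1"
    by (simp_all add: eventually_conj_iff tendsto_eventually)
  have "(\<lambda>K. lili_prob f K p) \<longlonglongrightarrow> 0"
    if "p < 1" "(\<lambda>K. f K * ln (real K) / real K) \<longlonglongrightarrow> c" "p = 0 \<or> c < - ln p" for c
  proof (cases "p = 0")
    case False
    with that p show ?thesis
      by (intro lili_prob_tendsto_zero_if_log_tolerance) auto
  qed (use at_zero in simp)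
  moreover have "(\<lambda>K. lili_prob f K p) \<longlonglongrightarrow> 0" if "p < 1/2" "(\<lambda>K. f K / real K) \<longlonglongrightarrow> 0"
  proof (cases "p = 0")
    case False
    with that p show ?thesis
      by (intro lili_prob_tendsto_zero_if_sublinear_tolerance) auto
  qed (use at_zero in simp)
  ultimately show ?thesis
    using at_one by (auto intro: lili_limit_isI[OF pn_prob pn_lim])
qed

end
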